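(* Let $G$ be a graph with $n$ nodes and graph Laplacian $\mathbf{L}$, and let $\mathbf{P},\mathbf{Q}\in\mathbb{R}^{n\times d}$. Then the matrix $[\mathbf{P}\ \mathbf{Q}]\in\mathbb{R}^{n\times 2d}$ (column-wise concatenation) is node- and adjacency-identifying if $\mathbf{L}=\mathbf{P}\mathbf{Q}^T$.
   Context: Graphs are finite, undirected, without self-loops and without isolated nodes; $\mathbf{L}=\mathbf{D}-\mathbf{A}(G)$ with $\mathbf{D}$ the degree matrix and $\mathbf{A}(G)$ the adjacency matrix; $d_k>0$ is a fixed constant. A matrix $\mathbf{R}\in\mathbb{R}^{n\times e}$ is node-identifying if there exist $\mathbf{W}^Q,\mathbf{W}^K$ (with $e$ rows) such that $\tilde{\mathbf{R}}=\frac{1}{\sqrt{d_k}}\mathbf{R}\mathbf{W}^Q(\mathbf{R}\mathbf{W}^K)^T$ satisfies $\tilde{\mathbf{R}}_{ij}=\max_k\tilde{\mathbf{R}}_{ik}\iff i=j$; adjacency-identifying if for some (possibly different) such matrices $\tilde{\mathbf{R}}_{ij}=\max_k\tilde{\mathbf{R}}_{ik}\iff\mathbf{A}(G)_{ij}=1$. *)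

theory Defs
  imports "Jordan_Normal_Form.Matrix"
begin

definition graph_no_isolated :: "nat \<Rightarrow> (nat \<Rightarrow> nat \<Rightarrow> bool) \<Rightarrow> bool" where
  "graph_no_isolated n E \<longleftrightarrow>
     (\<forall>i<n. \<forall>j<n. E i j \<longrightarrow> E j i) \<and>
     (\<forall>i<n. \<not> E i i) \<and>
     (\<forall>i<n. \<exists>j<n. E i j)"

definition adjacency_mat :: "nat \<Rightarrow> (nat \<Rightarrow> nat \<Rightarrow> bool) \<Rightarrow> real mat" where
  "adjacency_mat n E = mat n n (\<lambda>(i,j). if E i j then 1 else 0)"

definition degree_mat :: "nat \<Rightarrow> (nat \<Rightarrow> nat \<Rightarrow> bool) \<Rightarrow> real mat" where
  "degree_mat n E = mat n n (\<lambda>(i,j). if i = j then real (card {k. k < n \<and> E i k}) else 0)"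

definition laplacian_mat :: "nat \<Rightarrow> (nat \<Rightarrow> nat \<Rightarrow> bool) \<Rightarrow> real mat" where
  "laplacian_mat n E = degree_mat n E - adjacency_mat n E"

definition concat_cols :: "real mat \<Rightarrow> real mat \<Rightarrow> real mat" where
  "concat_cols P Q = mat (dim_row P) (dim_col P + dim_col Q)
     (\<lambda>(i,j). if j < dim_col P then P $$ (i,j) else Q $$ (i, j - dim_col P))"

definition attn_scores :: "real \<Rightarrow> real mat \<Rightarrow> real mat \<Rightarrow> real mat \<Rightarrow> real mat" where
  "attn_scores dk R WQ WK = (1 / sqrt dk) \<cdot>\<^sub>m (R * WQ * transpose_mat (R * WK))"

definition row_max :: "real mat \<Rightarrow> nat \<Rightarrow> real" where
  "row_max M i = Max {M $$ (i,k) | k. k < dim_col M}"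

definition node_identifying :: "real \<Rightarrow> real mat \<Rightarrow> bool" where
  "node_identifying dk R \<longleftrightarrow>
     (\<exists>m WQ WK. WQ \<in> carrier_mat (dim_col R) m \<and> WK \<in> carrier_mat (dim_col R) m \<and>
        (let S = attn_scores dk R WQ WK in
          \<forall>i<dim_row R. \<forall>j<dim_row R. (S $$ (i,j) = row_max S i \<longleftrightarrow> i = j)))"

definition adjacency_identifying :: "real \<Rightarrow> real mat \<Rightarrow> real mat \<Rightarrow> bool" where
  "adjacency_identifying dk A R \<longleftrightarrow>
     (\<exists>m WQ WK. WQ \<in> carrier_mat (dim_col R) m \<and> WK \<in> carrier_mat (dim_col R) m \<and>
        (let S = attn_scores dk R WQ WK in
          \<forall>i<dim_row R. \<forall>j<dim_row R. (S $$ (i,j) = row_max S i \<longleftrightarrow> A $$ (i,j) = 1)))"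

end

theory Submission
  imports Defs
begin

text \<open>With \<open>W\<^sup>Q = c [I; 0]\<close> and \<open>W\<^sup>K = [0; I]\<close> the matrix \<open>R = [P Q]\<close> gives
  \<open>R W\<^sup>Q = c P\<close> and \<open>R W\<^sup>K = Q\<close>, so the attention scores are a positive multiple of \<open>c L\<close>.
  For \<open>c = 1\<close> every row of \<open>L\<close> has its unique maximum, the degree \<open>\<ge> 1\<close>, on the diagonal,
  all other entries being \<open>0\<close> or \<open>-1\<close>. For \<open>c = -1\<close> the entries of a row of \<open>-L\<close> are
  \<open>1\<close> at the neighbours, \<open>0\<close> at the other non-neighbours and \<open>-deg \<le> -1\<close> on the diagonal;
  as there are no isolated nodes, the maximum \<open>1\<close> is attained exactly at the neighbours.\<close>

definition col_select_mat :: "nat \<Rightarrow> nat \<Rightarrow> (nat \<Rightarrow> nat) \<Rightarrow> real mat" where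
  "col_select_mat k m \<sigma> = mat k m (\<lambda>(i, j). of_bool (i = \<sigma> j))"

lemma col_select_mat_carrier [simp]: "col_select_mat k m \<sigma> \<in> carrier_mat k m"
  by (simp add: col_select_mat_def)

lemma mult_col_select_mat:
  assumes A: "A \<in> carrier_mat n k" and \<sigma>: "\<forall>j<m. \<sigma> j < k"
  shows "A * col_select_mat k m \<sigma> = mat n m (\<lambda>(i, j). A $$ (i, \<sigma> j))"
  using A \<sigma> by (auto simp: col_select_mat_def scalar_prod_def intro!: eq_matI)

lemma concat_cols_carrier:
  assumes "P \<in> carrier_mat n d" and "Q \<in> carrier_mat n e"
  shows "concat_cols P Q \<in> carrier_mat n (d + e)"
  using assms by (simp add: concat_cols_def)

lemma concat_cols_mult_select_left:
  assumes P: "P \<in> carrier_mat n d" and Q: "Q \<in> carrier_mat n e"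
  shows "concat_cols P Q * col_select_mat (d + e) d id = P"
  by (subst mult_col_select_mat[OF concat_cols_carrier[OF P Q]])
    (use P Q in \<open>auto simp: concat_cols_def\<close>)

lemma concat_cols_mult_select_right:
  assumes P: "P \<in> carrier_mat n d" and Q: "Q \<in> carrier_mat n e"
  shows "concat_cols P Q * col_select_mat (d + e) e ((+) d) = Q"
  by (subst mult_col_select_mat[OF concat_cols_carrier[OF P Q]])
    (use P Q in \<open>auto simp: concat_cols_def\<close>)

lemma attn_scores_concat_cols:
  assumes P: "P \<in> carrier_mat n d" and Q: "Q \<in> carrier_mat n d"
  shows "attn_scores dk (concat_cols P Q) (c \<cdot>\<^sub>m col_select_mat (d + d) d id)
           (col_select_mat (d + d) d ((+) d))
         = (1 / sqrt dk) \<cdot>\<^sub>m (c \<cdot>\<^sub>m (P * transpose_mat Q))"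
proof -
  have R: "concat_cols P Q \<in> carrier_mat n (d + d)"
    using P Q by (rule concat_cols_carrier)
  have "concat_cols P Q * (c \<cdot>\<^sub>m col_select_mat (d + d) d id) = c \<cdot>\<^sub>m P"
    using mult_smult_distrib[OF R col_select_mat_carrier] concat_cols_mult_select_left[OF P Q]
    by simp
  then show ?thesis
    unfolding attn_scores_def concat_cols_mult_select_right[OF P Q]
    using mult_smult_assoc_mat[OF P transpose_carrier_mat[THEN iffD2, OF Q]] by simp
qed

lemma row_max_eq_iff:
  assumes "j < dim_col M"
  shows "M $$ (i, j) = row_max M i \<longleftrightarrow> (\<forall>k<dim_col M. M $$ (i, k) \<le> M $$ (i, j))"
proof -
  have "finite {M $$ (i, k) | k. k < dim_col M}"
    by simp
  then show ?thesis
    unfolding row_max_def using assms by (auto intro!: Max_eqI[symmetric] Max_ge)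
qed

lemma row_max_smult_iff:
  fixes a :: real
  assumes "a > 0" and "i < dim_row M" and "j < dim_col M"
  shows "(a \<cdot>\<^sub>m M) $$ (i, j) = row_max (a \<cdot>\<^sub>m M) i \<longleftrightarrow> M $$ (i, j) = row_max M i"
proof -
  have "j < dim_col (a \<cdot>\<^sub>m M)"
    using assms by simp
  then show ?thesis
    unfolding row_max_eq_iff[OF \<open>j < dim_col M\<close>] row_max_eq_iff[OF \<open>j < dim_col (a \<cdot>\<^sub>m M)\<close>]
    using assms by simp
qed

lemma laplacian_mat_carrier: "laplacian_mat n E \<in> carrier_mat n n"
  unfolding laplacian_mat_def degree_mat_def adjacency_mat_def by (rule minus_carrier_mat) auto

lemma laplacian_mat_entry:
  assumes "i < n" and "j < n"
  shows "laplacian_mat n E $$ (i, j)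
           = (if i = j then real (card {k. k < n \<and> E i k}) else 0) - (if E i j then 1 else 0)"
  using assms by (simp add: laplacian_mat_def degree_mat_def adjacency_mat_def)

lemma graph_no_isolated_degree_ge_one:
  assumes "graph_no_isolated n E" and "i < n"
  shows "card {k. k < n \<and> E i k} \<ge> 1"
proof -
  obtain j where "j < n" and "E i j"
    using assms unfolding graph_no_isolated_def by blast
  then have "{k. k < n \<and> E i k} \<noteq> {}"
    by blast
  then show ?thesis
    by (simp add: Suc_le_eq card_gt_0_iff)
qed

lemma laplacian_row_max_iff:
  assumes G: "graph_no_isolated n E" and i: "i < n" and j: "j < n"
  shows "laplacian_mat n E $$ (i, j) = row_max (laplacian_mat n E) i \<longleftrightarrow> i = j"
proof -
  let ?L = "laplacian_mat n E"
  have diag: "?L $$ (i, i) \<ge> 1"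
    using G i graph_no_isolated_degree_ge_one unfolding graph_no_isolated_def
    by (auto simp: laplacian_mat_entry)
  have off_diag: "?L $$ (i, k) \<le> 0" if "k < n" and "k \<noteq> i" for k
    using i that by (simp add: laplacian_mat_entry)
  have "j < dim_col ?L"
    using j laplacian_mat_carrier[of n E] by simp
  then have "?L $$ (i, j) = row_max ?L i \<longleftrightarrow> (\<forall>k<n. ?L $$ (i, k) \<le> ?L $$ (i, j))"
    using laplacian_mat_carrier[of n E] by (simp add: row_max_eq_iff)
  also have "\<dots> \<longleftrightarrow> i = j"
  proof
    assume "\<forall>k<n. ?L $$ (i, k) \<le> ?L $$ (i, j)"
    then show "i = j"
      using i diag off_diag[OF j] by force
  qed (use diag off_diag in force)
  finally show ?thesis .
qed

lemma neg_laplacian_row_max_iff: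
  assumes G: "graph_no_isolated n E" and i: "i < n" and j: "j < n"
  shows "((-1) \<cdot>\<^sub>m laplacian_mat n E) $$ (i, j) = row_max ((-1) \<cdot>\<^sub>m laplacian_mat n E) i
         \<longleftrightarrow> E i j"
proof -
  let ?N = "(-1) \<cdot>\<^sub>m laplacian_mat n E"
  have "\<not> E i i"
    using G i unfolding graph_no_isolated_def by blast
  have neighbour: "?N $$ (i, k) = 1" if "k < n" and "E i k" for k
  proof -
    have "k \<noteq> i"
      using that \<open>\<not> E i i\<close> by blast
    then show ?thesis
      using i that laplacian_mat_carrier[of n E] by (simp add: laplacian_mat_entry)
  qed
  have non_neighbour: "?N $$ (i, k) \<le> 0" if "k < n" and "\<not> E i k" for k
    using i that laplacian_mat_carrier[of n E] by (simp add: laplacian_mat_entry)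
  obtain j' where j': "j' < n" "E i j'"
    using G i unfolding graph_no_isolated_def by blast
  have "j < dim_col ?N"
    using j laplacian_mat_carrier[of n E] by simp
  then have "?N $$ (i, j) = row_max ?N i \<longleftrightarrow> (\<forall>k<n. ?N $$ (i, k) \<le> ?N $$ (i, j))"
    using laplacian_mat_carrier[of n E] by (simp add: row_max_eq_iff)
  also have "\<dots> \<longleftrightarrow> E i j"
  proof
    assume "\<forall>k<n. ?N $$ (i, k) \<le> ?N $$ (i, j)"
    then have "1 \<le> ?N $$ (i, j)"
      using j' neighbour[OF j'] by metis
    then show "E i j"
      using non_neighbour[OF j] by fastforce
  next
    have "?N $$ (i, k) \<le> 1" if "k < n" for k
      using neighbour[OF that] non_neighbour[OF that] by (cases "E i k") auto
    moreover assume "E i j"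
    ultimately show "\<forall>k<n. ?N $$ (i, k) \<le> ?N $$ (i, j)"
      using neighbour[OF j] by simp
  qed
  finally show ?thesis .
qed

theorem lemmaF8:
  fixes n d :: nat and E :: "nat \<Rightarrow> nat \<Rightarrow> bool" and P Q :: "real mat" and dk :: real
  assumes "dk > 0"
    and "graph_no_isolated n E"
    and "P \<in> carrier_mat n d" and "Q \<in> carrier_mat n d"
    and "laplacian_mat n E = P * transpose_mat Q"
  shows "node_identifying dk (concat_cols P Q) \<and>
         adjacency_identifying dk (adjacency_mat n E) (concat_cols P Q)"
proof -
  let ?R = "concat_cols P Q" and ?L = "laplacian_mat n E"
  let ?W\<^sub>Q = "\<lambda>c. c \<cdot>\<^sub>m col_select_mat (d + d) d id"
    and ?W\<^sub>K = "col_select_mat (d + d) d ((+) d)"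
  have R: "?R \<in> carrier_mat n (d + d)"
    using assms(3,4) by (rule concat_cols_carrier)
  have scores: "attn_scores dk ?R (?W\<^sub>Q c) ?W\<^sub>K = (1 / sqrt dk) \<cdot>\<^sub>m (c \<cdot>\<^sub>m ?L)" for c
    using attn_scores_concat_cols[OF assms(3,4)] assms(5) by simp
  have scale: "1 / sqrt dk > 0"
    using assms(1) by simp
  have "attn_scores dk ?R (?W\<^sub>Q 1) ?W\<^sub>K $$ (i, j)
        = row_max (attn_scores dk ?R (?W\<^sub>Q 1) ?W\<^sub>K) i \<longleftrightarrow> i = j"
    if "i < n" and "j < n" for i j
    unfolding scores
    using row_max_smult_iff[OF scale, of i "1 \<cdot>\<^sub>m ?L" j] row_max_smult_iff[of 1 i ?L j]
      laplacian_row_max_iff[OF assms(2) that] that laplacian_mat_carrier[of n E]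
    by simp
  then have "node_identifying dk ?R"
    unfolding node_identifying_def Let_def using R
    by (intro exI[of _ d] exI[of _ "?W\<^sub>Q 1"] exI[of _ ?W\<^sub>K]) auto
  moreover have "attn_scores dk ?R (?W\<^sub>Q (-1)) ?W\<^sub>K $$ (i, j)
        = row_max (attn_scores dk ?R (?W\<^sub>Q (-1)) ?W\<^sub>K) i \<longleftrightarrow> adjacency_mat n E $$ (i, j) = 1"
    if "i < n" and "j < n" for i j
    unfolding scores
    using row_max_smult_iff[OF scale, of i "(-1) \<cdot>\<^sub>m ?L" j]
      neg_laplacian_row_max_iff[OF assms(2) that] that laplacian_mat_carrier[of n E]
    by (simp add: adjacency_mat_def)
  then have "adjacency_identifying dk (adjacency_mat n E) ?R"
    unfolding adjacency_identifying_def Let_def using R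
    by (intro exI[of _ d] exI[of _ "?W\<^sub>Q (-1)"] exI[of _ ?W\<^sub>K]) auto
  ultimately show ?thesis ..
qed

end
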